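(* For every $N\ge3$ and every $\lambda\in(0,1]$, the matrix $M(\lambda)$ is primitive (some power of it has all entries strictly positive).
   Context: Fix an integer $N\ge 3$. Let $\mathcal G_N$ be the groupoid with object set $\{1,\dots,N\}$ generated by arrows $A_{i,j}^{(k)}$, $i\neq j\in\{1,\dots,N\}$, $k\in\{-1,1\}$, with source $i$ and target $j$, subject to the relations $A_{i,j}^{(k)}A_{j,\ell}^{(k)}=A_{i,\ell}^{(k)}$ for all $i,j,\ell$, $k$, with the convention $A_{i,i}^{(k)}:=e_i$ (unit at object $i$). Let $\mathcal A$ be its arrow set. Let $\{W_n\}_{n\ge0}$ be the Markov chain on $\mathcal A$ with $P(W_{n+1}=y\mid W_n=x)=p_{i,j}^{(k)}$ if $x^{-1}y=A_{i,j}^{(k)}$ with $i\ne j$ and $0$ otherwise, where $p_{i,j}^{(k)}\in(0,1)$ and $\sum_{j\ne i}\sum_{k=\pm1}p_{i,j}^{(k)}=1$ for each $i$; $E_x$ denotes expectation with $W_0=x$. For $x\in\mathcal A$ let $T(0,x)=\inf\{n\ge0:W_n=W_0x\}$ (possibly $\infty$) and $R_{i,j}^{(k)}(\lambda)=E_{e_i}[\lambda^{T(0,A_{i,j}^{(k)})}]$. $M(\lambda)$ is the $2N(N-1)\times2N(N-1)$ matrix with rows and columns indexed by triples $(i,j,k)$, $i\ne j$, $k\in\{\pm1\}$, whose entry in row $(i,j,k)$ and column $(i',j',k')$ is: $\lambda p_{i,i'}^{(k)}$ if $i'\notin\{i,j\}$, $j'=j$, $k'=k$; $\lambda p_{i,i'}^{(-k)}R_{i,j}^{(k)}(\lambda)$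 if $i'\ne i$, $j'=i$, $k'=-k$; $\lambda\sum_{\ell\neq i}p_{i,\ell}^{(-k)}R_{\ell,i}^{(-k)}(\lambda)$ if $(i',j',k')=(i,j,k)$; and $0$ otherwise. *)

theory Defs
  imports Complex_Main
begin

text \<open>Arrows of the groupoid G_N in reduced normal form: a source object i0 and a
list of steps (object, label) with consecutive objects distinct and labels alternating.
The unit e_i is (i, []); the generator A_{i,j}^{(k)} is (i, [(j,k)]).\<close>

type_synonym arrow = "nat \<times> (nat \<times> int) list"

definition tgt :: "arrow \<Rightarrow> nat" where
  "tgt x = (case x of (i0, ws) \<Rightarrow> if ws = [] then i0 else fst (last ws))"

text \<open>Right multiplication of a reduced arrow x by the generator A_{tgt x, j}^{(k)}.\<close>
definition gmul :: "arrow \<Rightarrow> nat \<Rightarrow> int \<Rightarrow> arrow" where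
  "gmul x j k = (case x of (i0, ws) \<Rightarrow>
     if ws = [] then (i0, [(j, k)])
     else if snd (last ws) = k then
       (let prev = (if length ws = 1 then i0 else fst (last (butlast ws))) in
        if j = prev then (i0, butlast ws) else (i0, butlast ws @ [(j, k)]))
     else (i0, ws @ [(j, k)]))"

text \<open>fp N p n x y = probability that the walk started at x first hits y at time n.\<close>
fun fp :: "nat \<Rightarrow> (nat \<Rightarrow> nat \<Rightarrow> int \<Rightarrow> real) \<Rightarrow> nat \<Rightarrow> arrow \<Rightarrow> arrow \<Rightarrow> real" where
  "fp N p 0 x y = (if x = y then 1 else 0)"
| "fp N p (Suc n) x y = (if x = y then 0 else
     (\<Sum>j\<in>{1..N} - {tgt x}. \<Sum>k\<in>{-1, 1}. p (tgt x) j k * fp N p n (gmul x j k) y))"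

text \<open>R_{i,j}^{(k)}(lambda) = E_{e_i}[lambda^T], with T = infinity contributing 0.\<close>
definition Rgf :: "nat \<Rightarrow> (nat \<Rightarrow> nat \<Rightarrow> int \<Rightarrow> real) \<Rightarrow> real \<Rightarrow> nat \<Rightarrow> nat \<Rightarrow> int \<Rightarrow> real" where
  "Rgf N p lam i j k = (\<Sum>n. lam ^ n * fp N p n (i, []) (i, [(j, k)]))"

definition Idx :: "nat \<Rightarrow> (nat \<times> nat \<times> int) set" where
  "Idx N = {(i, j, k). i \<in> {1..N} \<and> j \<in> {1..N} \<and> i \<noteq> j \<and> k \<in> {-1, 1}}"

definition Mmat :: "nat \<Rightarrow> (nat \<Rightarrow> nat \<Rightarrow> int \<Rightarrow> real) \<Rightarrow> real \<Rightarrow>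
    (nat \<times> nat \<times> int) \<Rightarrow> (nat \<times> nat \<times> int) \<Rightarrow> real" where
  "Mmat N p lam r c = (case r of (i, j, k) \<Rightarrow> case c of (i', j', k') \<Rightarrow>
     if i' \<notin> {i, j} \<and> j' = j \<and> k' = k then lam * p i i' k
     else if i' \<noteq> i \<and> j' = i \<and> k' = - k then lam * p i i' (- k) * Rgf N p lam i j k
     else if (i', j', k') = (i, j, k) then
       lam * (\<Sum>l\<in>{1..N} - {i}. p i l (- k) * Rgf N p lam l i (- k))
     else 0)"

fun mpow :: "'a set \<Rightarrow> ('a \<Rightarrow> 'a \<Rightarrow> real) \<Rightarrow> nat \<Rightarrow> 'a \<Rightarrow> 'a \<Rightarrow> real" where
  "mpow I M 0 a b = (if a = b then 1 else 0)"
| "mpow I M (Suc n) a b = (\<Sum>c\<in>I. mpow I M n a c * M c b)"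

definition primitive :: "'a set \<Rightarrow> ('a \<Rightarrow> 'a \<Rightarrow> real) \<Rightarrow> bool" where
  "primitive I M \<longleftrightarrow> (\<exists>m>0. \<forall>a\<in>I. \<forall>b\<in>I. mpow I M m a b > 0)"

end

theory Submission
  imports Defs
begin

text \<open>Every entry of M(lambda) is nonnegative, and R_{i,j}^{(k)}(lambda) \<ge> lambda p_{i,j}^{(k)} > 0
by the one-step path. Hence M(lambda) is positive at (i,j,k) \<rightarrow> (i',j,k) for i' \<notin> {i,j}, at
(i,j,k) \<rightarrow> (i',i,-k) for i' \<noteq> i, and on the diagonal, whose sum contains R_{l,i}^{(-k)}(lambda)
for a third object l (this is where N \<ge> 3 is needed). Any two indices are joined by a walk of
length exactly 3 along these moves, shorter walks being padded by diagonal steps, so M(lambda)^3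
is entrywise positive.\<close>

lemma mpow_nonneg:
  assumes "finite I" "\<And>a b. a \<in> I \<Longrightarrow> b \<in> I \<Longrightarrow> 0 \<le> M a b" "b \<in> I"
  shows "0 \<le> mpow I M n a b"
  using assms(3) by (induction n arbitrary: b) (auto intro!: sum_nonneg simp: assms(1,2))

lemma mpow_Suc_pos:
  assumes "finite I" "\<And>a b. a \<in> I \<Longrightarrow> b \<in> I \<Longrightarrow> 0 \<le> M a b"
    and "0 < mpow I M n a c" "0 < M c b" "c \<in> I" "b \<in> I"
  shows "0 < mpow I M (Suc n) a b"
proof -
  have "0 < mpow I M n a c * M c b" using assms(3,4) by simp
  also have "\<dots> \<le> (\<Sum>c\<in>I. mpow I M n a c * M c b)"
    by (rule member_le_sum)
      (use assms mpow_nonneg[OF assms(1,2)] in \<open>auto intro!: mult_nonneg_nonneg\<close>)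
  finally show ?thesis by simp
qed

lemma primitive_if_walks_of_length_3:
  assumes "finite I" "\<And>a b. a \<in> I \<Longrightarrow> b \<in> I \<Longrightarrow> 0 \<le> M a b"
    and "\<And>a b. a \<in> I \<Longrightarrow> b \<in> I \<Longrightarrow>
           \<exists>x\<in>I. \<exists>y\<in>I. 0 < M a x \<and> 0 < M x y \<and> 0 < M y b"
  shows "primitive I M"
  unfolding primitive_def
proof (intro exI[of _ 3] conjI ballI)
  fix a b assume "a \<in> I" "b \<in> I"
  then obtain x y where "x \<in> I" "y \<in> I" "0 < M a x" "0 < M x y" "0 < M y b"
    using assms(3) by blast
  have step: "0 < mpow I M (Suc n) a c" if "0 < mpow I M n a d" "0 < M d c" "d \<in> I" "c \<in> I"
    for n c d
    using mpow_Suc_pos[of I M, OF assms(1)] assms(2) that by blast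
  have "0 < mpow I M 0 a a" by simp
  then have "0 < mpow I M (Suc 0) a x"
    using \<open>0 < M a x\<close> \<open>a \<in> I\<close> \<open>x \<in> I\<close> by (rule step)
  then have "0 < mpow I M (Suc (Suc 0)) a y"
    using \<open>0 < M x y\<close> \<open>x \<in> I\<close> \<open>y \<in> I\<close> by (rule step)
  then have "0 < mpow I M (Suc (Suc (Suc 0))) a b"
    using \<open>0 < M y b\<close> \<open>y \<in> I\<close> \<open>b \<in> I\<close> by (rule step)
  then show "0 < mpow I M 3 a b" by (simp add: numeral_3_eq_3)
qed simp

lemma finite_Idx: "finite (Idx N)"
  by (rule finite_subset[of _ "{1..N} \<times> {1..N} \<times> {-1, 1}"]) (auto simp: Idx_def)

lemma Idx_iff: "(i, j, k) \<in> Idx N \<longleftrightarrow> i \<in> {1..N} \<and> j \<in> {1..N} \<and> i \<noteq> j \<and> k \<in> {-1, 1}"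
  by (simp add: Idx_def)

lemma third_object:
  fixes N :: nat
  assumes "N \<ge> 3"
  obtains l where "l \<in> {1..N}" "l \<noteq> i" "l \<noteq> j"
proof -
  have "card {i, j} \<le> 2" by (cases "i = j") simp_all
  then have "card {i, j} < card {1..N}" using assms by simp
  then have "\<not> {1..N} \<subseteq> {i, j}"
    using card_mono[of "{i, j}" "{1..N}"] by auto
  then show ?thesis using that by blast
qed

lemma Idx_walks_of_length_3:
  fixes E :: "nat \<times> nat \<times> int \<Rightarrow> nat \<times> nat \<times> int \<Rightarrow> bool"
  assumes "N \<ge> 3"
    and refl: "\<And>a. a \<in> Idx N \<Longrightarrow> E a a"
    and shift: "\<And>i j k i'. (i, j, k) \<in> Idx N \<Longrightarrow> i' \<in> {1..N} \<Longrightarrow> i' \<notin> {i, j} \<Longrightarrow>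
                  E (i, j, k) (i', j, k)"
    and flip: "\<And>i j k i'. (i, j, k) \<in> Idx N \<Longrightarrow> i' \<in> {1..N} \<Longrightarrow> i' \<noteq> i \<Longrightarrow>
                 E (i, j, k) (i', i, - k)"
    and a: "a \<in> Idx N" and b: "b \<in> Idx N"
  shows "\<exists>x\<in>Idx N. \<exists>y\<in>Idx N. E a x \<and> E x y \<and> E y b"
proof -
  obtain i j k i' j' k' where ab: "a = (i, j, k)" "b = (i', j', k')"
    by (cases a, cases b) auto
  have h: "i \<in> {1..N}" "j \<in> {1..N}" "i \<noteq> j" "k \<in> {-1, 1}"
          "i' \<in> {1..N}" "j' \<in> {1..N}" "i' \<noteq> j'" "k' \<in> {-1, 1}"
    using a b ab by (auto simp: Idx_iff)
  obtain l where l: "l \<in> {1..N}" "l \<noteq> i" "l \<noteq> j"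
    using third_object[OF \<open>N \<ge> 3\<close>] by blast
  have neg: "- k \<in> {-1, 1}" using h by auto
  have "k' = k \<or> k' = - k" using h by auto
  moreover {
    assume "k' = - k" "j' = i"
    then have "E a a" "E a b"
      using ab h a refl flip[of i j k i'] by auto
    then have ?thesis using a by blast
  } moreover {
    assume "k' = - k" "j' \<notin> {i, j}"
    then have "E a a" "E a (j', j, k)" "E (j', j, k) b" "(j', j, k) \<in> Idx N"
      using ab h a refl shift[of i j k j'] flip[of j' j k i'] by (auto simp: Idx_iff)
    then have ?thesis using a by blast
  } moreover {
    assume "k' = - k" "j' = j"
    then have "E a (l, i, - k)" "E (l, i, - k) (j, l, k)" "E (j, l, k) b"
        "(l, i, - k) \<in> Idx N" "(j, l, k) \<in> Idx N"
      using ab h l neg flip[of i j k l] flip[of l i "- k" j] flip[of j l k i']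
      by (auto simp: Idx_iff)
    then have ?thesis by blast
  } moreover {
    assume "k' = k" "j' \<noteq> i"
    then have "E a a" "E a (j', i, - k)" "E (j', i, - k) b" "(j', i, - k) \<in> Idx N"
      using ab h a neg refl flip[of i j k j'] flip[of j' i "- k" i'] by (auto simp: Idx_iff)
    then have ?thesis using a by blast
  } moreover {
    assume "k' = k" "j' = i"
    then have "E a (l, j, k)" "E (l, j, k) (i, l, - k)" "E (i, l, - k) b"
        "(l, j, k) \<in> Idx N" "(i, l, - k) \<in> Idx N"
      using ab h l neg shift[of i j k l] flip[of l j k i] flip[of i l "- k" i']
      by (auto simp: Idx_iff)
    then have ?thesis by blast
  }
  ultimately show ?thesis by blast
qed

definition valid_arrow :: "nat \<Rightarrow> arrow \<Rightarrow> bool" where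
  "valid_arrow N x \<longleftrightarrow> fst x \<in> {1..N} \<and> (\<forall>a\<in>set (snd x). fst a \<in> {1..N})"

lemma tgt_valid: "valid_arrow N x \<Longrightarrow> tgt x \<in> {1..N}"
  unfolding valid_arrow_def tgt_def by (cases x) (auto split: if_splits)

lemma gmul_valid: "valid_arrow N x \<Longrightarrow> j \<in> {1..N} \<Longrightarrow> valid_arrow N (gmul x j k)"
  unfolding valid_arrow_def gmul_def
  by (cases x) (auto simp: Let_def dest: in_set_butlastD split: if_splits)

lemma fp_generator_one_step:
  assumes "j \<in> {1..N} - {i}" "k \<in> {-1, 1}"
  shows "fp N p 1 (i, []) (i, [(j, k)]) = p i j k"
proof -
  have "fp N p 1 (i, []) (i, [(j, k)]) =
        (\<Sum>j'\<in>{1..N} - {i}. \<Sum>k'\<in>{-1, 1}. p i j' k' * (if (j', k') = (j, k) then 1 else 0))"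
    by (simp add: tgt_def gmul_def)
  also have "\<dots> = (\<Sum>j'\<in>{1..N} - {i}. if j' = j then p i j k else 0)"
    using assms by (intro sum.cong) auto
  also have "\<dots> = p i j k"
    using assms by simp
  finally show ?thesis .
qed

locale substochastic_kernel =
  fixes N :: nat and p :: "nat \<Rightarrow> nat \<Rightarrow> int \<Rightarrow> real"
  assumes p_nonneg: "\<And>i j k. i \<in> {1..N} \<Longrightarrow> j \<in> {1..N} \<Longrightarrow> i \<noteq> j \<Longrightarrow> k \<in> {-1, 1} \<Longrightarrow>
                       0 \<le> p i j k"
    and row_sum_le_1: "\<And>i. i \<in> {1..N} \<Longrightarrow> (\<Sum>j\<in>{1..N} - {i}. \<Sum>k\<in>{-1, 1}. p i j k) \<le> 1"
begin

lemma fp_nonneg: "valid_arrow N x \<Longrightarrow> 0 \<le> fp N p n x y"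
proof (induction n arbitrary: x)
  case (Suc n)
  have "0 \<le> p (tgt x) j k * fp N p n (gmul x j k) y"
    if "j \<in> {1..N} - {tgt x}" "k \<in> {-1, 1}" for j k
    using that tgt_valid[OF Suc.prems]
    by (intro mult_nonneg_nonneg p_nonneg Suc.IH gmul_valid[OF Suc.prems]) auto
  then have "0 \<le> (\<Sum>j\<in>{1..N} - {tgt x}. \<Sum>k\<in>{-1, 1}. p (tgt x) j k * fp N p n (gmul x j k) y)"
    by (intro sum_nonneg) blast
  then show ?case by simp
qed simp

lemma fp_partial_sum_le_1: "valid_arrow N x \<Longrightarrow> (\<Sum>n<K. fp N p n x y) \<le> 1"
proof (induction K arbitrary: x)
  case (Suc K)
  let ?i = "tgt x"
  have i: "?i \<in> {1..N}" using tgt_valid[OF Suc.prems] .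
  have shift: "(\<Sum>n<Suc K. fp N p n x y) = fp N p 0 x y + (\<Sum>n<K. fp N p (Suc n) x y)"
    by (rule sum.lessThan_Suc_shift)
  show ?case
  proof (cases "x = y")
    case False
    have "(\<Sum>n<Suc K. fp N p n x y) = (\<Sum>n<K. fp N p (Suc n) x y)"
      using False shift by simp
    also have "\<dots> = (\<Sum>j\<in>{1..N} - {?i}. \<Sum>k\<in>{-1, 1}.
                      p ?i j k * (\<Sum>n<K. fp N p n (gmul x j k) y))"
      using False by (simp add: sum_distrib_left sum.swap[of _ "{..<K}"])
    also have "\<dots> \<le> (\<Sum>j\<in>{1..N} - {?i}. \<Sum>k\<in>{-1, 1}. p ?i j k)"
      using Suc.IH gmul_valid[OF Suc.prems] i
      by (intro sum_mono mult_right_le_one_le) (auto intro!: p_nonneg sum_nonneg fp_nonneg)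
    also have "\<dots> \<le> 1" using row_sum_le_1[OF i] .
    finally show ?thesis .
  qed (use shift in simp)
qed simp

lemma Rgf_summable:
  assumes "i \<in> {1..N}" "0 \<le> lam" "lam \<le> 1"
  shows "summable (\<lambda>n. lam ^ n * fp N p n (i, []) (i, [(j, k)]))"
proof -
  have valid: "valid_arrow N (i, [])" using assms(1) by (simp add: valid_arrow_def)
  show ?thesis
  proof (rule summableI_nonneg_bounded[where x = 1])
    show "0 \<le> lam ^ n * fp N p n (i, []) (i, [(j, k)])" for n
      using assms fp_nonneg[OF valid] by simp
    have "(\<Sum>n<K. lam ^ n * fp N p n (i, []) (i, [(j, k)]))
          \<le> (\<Sum>n<K. fp N p n (i, []) (i, [(j, k)]))" for K
      using assms fp_nonneg[OF valid]
      by (intro sum_mono mult_left_le_one_le) (auto simp: power_le_one)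
    then show "(\<Sum>n<K. lam ^ n * fp N p n (i, []) (i, [(j, k)])) \<le> 1" for K
      using fp_partial_sum_le_1[OF valid] order_trans by blast
  qed
qed

lemma Rgf_nonneg:
  assumes "i \<in> {1..N}" "0 \<le> lam" "lam \<le> 1"
  shows "0 \<le> Rgf N p lam i j k"
  unfolding Rgf_def
  using assms fp_nonneg[of "(i, [])"]
  by (intro suminf_nonneg Rgf_summable) (auto simp: valid_arrow_def)

lemma Rgf_ge_one_step:
  assumes "i \<in> {1..N}" "j \<in> {1..N}" "i \<noteq> j" "k \<in> {-1, 1}" "0 \<le> lam" "lam \<le> 1"
  shows "lam * p i j k \<le> Rgf N p lam i j k"
proof -
  have "lam * p i j k = lam ^ 1 * fp N p 1 (i, []) (i, [(j, k)])"
    using assms fp_generator_one_step[of j N i k p] by simp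
  also have "\<dots> \<le> Rgf N p lam i j k"
    unfolding Rgf_def
    using sum_le_suminf[OF Rgf_summable[OF assms(1,5,6)], of "{1}"] assms(1,5)
      fp_nonneg[of "(i, [])"] by (simp add: valid_arrow_def)
  finally show ?thesis .
qed

end

locale positive_kernel = substochastic_kernel +
  assumes p_pos: "\<And>i j k. i \<in> {1..N} \<Longrightarrow> j \<in> {1..N} \<Longrightarrow> i \<noteq> j \<Longrightarrow> k \<in> {-1, 1} \<Longrightarrow>
                    0 < p i j k"
begin

lemma Rgf_pos:
  assumes "i \<in> {1..N}" "j \<in> {1..N}" "i \<noteq> j" "k \<in> {-1, 1}" "0 < lam" "lam \<le> 1"
  shows "0 < Rgf N p lam i j k"
proof -
  have "0 < lam * p i j k" using assms p_pos[of i j k] by simp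
  also have "\<dots> \<le> Rgf N p lam i j k" using assms by (intro Rgf_ge_one_step) auto
  finally show ?thesis .
qed

context
  fixes lam :: real
  assumes lam: "0 < lam" "lam \<le> 1"
begin

lemma Mmat_nonneg:
  assumes "a \<in> Idx N" "b \<in> Idx N"
  shows "0 \<le> Mmat N p lam a b"
proof -
  obtain i j k i' j' k' where ab: "a = (i, j, k)" "b = (i', j', k')"
    by (cases a, cases b) auto
  have h: "i \<in> {1..N}" "j \<in> {1..N}" "k \<in> {-1, 1}" "i' \<in> {1..N}" "- k \<in> {-1, 1}"
    using assms ab by (auto simp: Idx_iff)
  have "0 \<le> (\<Sum>l\<in>{1..N} - {i}. p i l (- k) * Rgf N p lam l i (- k))"
    using h lam by (auto intro!: sum_nonneg mult_nonneg_nonneg p_nonneg Rgf_nonneg)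
  then show ?thesis
    using h lam p_nonneg[of i i' k] p_nonneg[of i i' "- k"] Rgf_nonneg[of i lam j k]
    by (auto simp: ab Mmat_def)
qed

lemma Mmat_diag_pos:
  assumes "N \<ge> 3" "a \<in> Idx N"
  shows "0 < Mmat N p lam a a"
proof -
  obtain i j k where a: "a = (i, j, k)" by (cases a) auto
  have h: "i \<in> {1..N}" "j \<in> {1..N}" "- k \<in> {-1, 1}"
    using assms(2) a by (auto simp: Idx_iff)
  obtain l where l: "l \<in> {1..N}" "l \<noteq> i" "l \<noteq> j"
    using third_object[OF assms(1)] by blast
  have "0 < p i l (- k) * Rgf N p lam l i (- k)"
    using h l lam by (auto intro!: mult_pos_pos p_pos Rgf_pos)
  also have "\<dots> \<le> (\<Sum>l\<in>{1..N} - {i}. p i l (- k) * Rgf N p lam l i (- k))"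
    using h l lam
    by (intro member_le_sum) (auto intro!: mult_nonneg_nonneg p_nonneg Rgf_nonneg)
  finally show ?thesis using lam by (simp add: a Mmat_def)
qed

lemma Mmat_shift_pos:
  assumes "(i, j, k) \<in> Idx N" "i' \<in> {1..N}" "i' \<notin> {i, j}"
  shows "0 < Mmat N p lam (i, j, k) (i', j, k)"
  using assms lam p_pos[of i i' k] by (auto simp: Idx_iff Mmat_def)

lemma Mmat_flip_pos:
  assumes "(i, j, k) \<in> Idx N" "i' \<in> {1..N}" "i' \<noteq> i"
  shows "0 < Mmat N p lam (i, j, k) (i', i, - k)"
proof -
  have "- k \<in> {-1, 1}" "0 < Rgf N p lam i j k"
    using assms lam by (auto simp: Idx_iff intro!: Rgf_pos)
  then show ?thesis
    using assms lam p_pos[of i i' "- k"] by (auto simp: Idx_iff Mmat_def)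
qed

end

end

theorem lemmaA1:
  fixes N :: nat and p :: "nat \<Rightarrow> nat \<Rightarrow> int \<Rightarrow> real" and lam :: real
  assumes "N \<ge> 3"
    and "\<And>i j k. i \<in> {1..N} \<Longrightarrow> j \<in> {1..N} \<Longrightarrow> i \<noteq> j \<Longrightarrow> k \<in> {-1, 1} \<Longrightarrow>
           0 < p i j k \<and> p i j k < 1"
    and "\<And>i. i \<in> {1..N} \<Longrightarrow> (\<Sum>j\<in>{1..N} - {i}. \<Sum>k\<in>{-1, 1}. p i j k) = 1"
    and "0 < lam" and "lam \<le> 1"
  shows "primitive (Idx N) (Mmat N p lam)"
proof -
  interpret positive_kernel N p
    by unfold_locales (use assms(2,3) in \<open>auto simp: less_imp_le\<close>)
  show ?thesis
  proof (rule primitive_if_walks_of_length_3[OF finite_Idx])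
    show "0 \<le> Mmat N p lam a b" if "a \<in> Idx N" "b \<in> Idx N" for a b
      using Mmat_nonneg assms(4,5) that .
    show "\<exists>x\<in>Idx N. \<exists>y\<in>Idx N. 0 < Mmat N p lam a x \<and> 0 < Mmat N p lam x y \<and> 0 < Mmat N p lam y b"
      if "a \<in> Idx N" "b \<in> Idx N" for a b
      using assms(1,4,5) that
      by (intro Idx_walks_of_length_3 Mmat_diag_pos Mmat_shift_pos Mmat_flip_pos)
  qed
qed

end
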